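(* Assume the standing setting. If a Borel integrand $L:X\times\mathbb{M}\to[0,\infty]$ is radially uniformly upper semicontinuous, then its $\mu$-quasiconvexification $\mathcal{Q}_\mu L$ is radially uniformly upper semicontinuous.
   Context: Standing setting. $(X,d)$ is a separable compact length space and $\mu$ is a positive Radon measure on $X$. $Q_\rho(x)=\{y\in X:d(x,y)<\rho\}$ and $\fint_B f\,d\mu=\mu(B)^{-1}\int_B f\,d\mu$. $\mu$ is doubling: there is $C_d\ge1$ with $\mu(Q_\rho(x))\le C_d\,\mu(Q_{\rho/2}(x))$ for all $x,\rho>0$. Fix $1<p<\infty$. $X$ supports a weak $(1,p)$-Poincaré inequality (there are $C_P>0,\sigma\ge1$ with $\fint_{Q_\rho(x)}|f-\fint_{Q_\rho(x)}f|d\mu\le\rho C_P(\fint_{Q_{\sigma\rho}(x)}g^pd\mu)^{1/p}$ for every $f\in L^p_\mu(X)$ and every $p$-weak upper gradient $g$ of $f$, i.e. $L^p$-limit of upper gradients $g_n$ of functions $f_n\to f$ in $L^p_\mu$). By Cheeger's theorem there are an integer $N\ge1$ and a linear operator $D_\mu:\mathrm{Lip}(X)\to L^\infty_\mu(X;\mathbb{R}^N)$ (Cheeger differential). Fix an integer $m\ge1$; $\mathbb{M}$ denotes the real $m\times N$ matrices. For $u=(u_1,\dots,u_m)\in\mathrm{Lip}(X;\mathbb{R}^m)$, $\nabla_\mu u$ has rows $D_\mu u_i$; $W^{1,p}_\mu(X;\mathbb{R}^m)$ is the completion of $\mathrm{Lip}(X;\mathbb{R}^m)$ for $\|u\|_{L^p_\mu}+\|\nabla_\mu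 u\|_{L^p_\mu}$, with $\nabla_\mu$ extended to it. For open $A$, $W^{1,p}_{\mu,0}(A;\mathbb{R}^m)$ is the closure in $W^{1,p}_\mu$ of $\{u\in\mathrm{Lip}(X;\mathbb{R}^m):u=0\text{ on }X\setminus A\}$. For a Borel $F:X\times\mathbb{M}\to[0,\infty]$: $\mathcal{Q}_\mu F(x,\xi)=\limsup_{\rho\to0}\inf\{\fint_{Q_\rho(x)}F(y,\xi+\nabla_\mu w(y))d\mu(y):w\in W^{1,p}_{\mu,0}(Q_\rho(x);\mathbb{R}^m)\}$; $\mathbb{F}_x=\{\xi:F(x,\xi)<\infty\}$; for $a:X\to]0,\infty]$, $\Delta^a_F(t)=\sup_{x\in X}\sup_{\xi\in\mathbb{F}_x}\frac{F(x,t\xi)-F(x,\xi)}{a(x)+F(x,\xi)}$ for $t\in[0,1]$. $F$ is radially uniformly upper semicontinuous (ru-usc) if there is $a\in L^1_\mu(X;]0,\infty])$ with $\limsup_{t\to1^-}\Delta^a_F(t)\le0$. *)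

theory Defs
  imports "HOL-Analysis.Analysis"
begin

definition curve_length :: "(real \<Rightarrow> 'a::metric_space) \<Rightarrow> real \<Rightarrow> real \<Rightarrow> ereal" where
  "curve_length c a b =
     (SUP (n, t) \<in> {(n::nat, t::nat \<Rightarrow> real). t 0 = a \<and> t n = b \<and> (\<forall>i<n. t i \<le> t (Suc i))}.
        ereal (\<Sum>i<n. dist (c (t i)) (c (t (Suc i)))))"

definition length_space :: "'a::metric_space itself \<Rightarrow> bool" where
  "length_space _ \<longleftrightarrow>
     (\<forall>x y::'a. ereal (dist x y) =
        (INF c \<in> {c. continuous_on {0..1} c \<and> c 0 = x \<and> c 1 = y}. curve_length c 0 1))"

definition arclength_curve :: "(real \<Rightarrow> 'a::metric_space) \<Rightarrow> real \<Rightarrow> bool" where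
  "arclength_curve c l \<longleftrightarrow> 0 \<le> l \<and>
     (\<forall>a b. 0 \<le> a \<and> a \<le> b \<and> b \<le> l \<longrightarrow> curve_length c a b = ereal (b - a))"

text \<open>Upper gradient (Heinonen--Koskela): along every rectifiable curve (equivalently, every
  arc-length parametrised curve) the oscillation of f is bounded by the line integral of g.\<close>
definition upper_gradient :: "('a::metric_space \<Rightarrow> real) \<Rightarrow> ('a \<Rightarrow> ennreal) \<Rightarrow> bool" where
  "upper_gradient f g \<longleftrightarrow> g \<in> borel_measurable borel \<and>
     (\<forall>c l. arclength_curve c l \<longrightarrow>
        ennreal \<bar>f (c l) - f (c 0)\<bar> \<le> (\<integral>\<^sup>+ s. g (c s) * indicator {0..l} s \<partial>lborel))"

definition Lp_space :: "'a measure \<Rightarrow> real \<Rightarrow> ('a \<Rightarrow> 'b::real_normed_vector) \<Rightarrow> bool" where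
  "Lp_space M p f \<longleftrightarrow> f \<in> borel_measurable M \<and> (\<integral>\<^sup>+ x. ennreal (norm (f x) powr p) \<partial>M) < \<infinity>"

definition p_weak_upper_gradient ::
  "'a::metric_space measure \<Rightarrow> real \<Rightarrow> ('a \<Rightarrow> real) \<Rightarrow> ('a \<Rightarrow> real) \<Rightarrow> bool" where
  "p_weak_upper_gradient M p f g \<longleftrightarrow> Lp_space M p g \<and>
     (\<exists>fn gn. (\<forall>n. Lp_space M p (fn n) \<and> upper_gradient (fn n) (gn n) \<and>
                   (\<integral>\<^sup>+ x. gn n x powr p \<partial>M) < \<infinity>) \<and>
        ((\<lambda>n. \<integral>\<^sup>+ x. ennreal (\<bar>fn n x - f x\<bar> powr p) \<partial>M) \<longlonglongrightarrow> 0) \<and>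
        ((\<lambda>n. \<integral>\<^sup>+ x. ennreal (\<bar>enn2real (gn n x) - g x\<bar> powr p) \<partial>M) \<longlonglongrightarrow> 0))"

definition doubling :: "'a::metric_space measure \<Rightarrow> bool" where
  "doubling M \<longleftrightarrow> (\<exists>Cd\<ge>1. \<forall>x \<rho>. \<rho> > 0 \<longrightarrow>
      emeasure M (ball x \<rho>) \<le> ennreal Cd * emeasure M (ball x (\<rho> / 2)))"

definition avg :: "'a measure \<Rightarrow> 'a set \<Rightarrow> ('a \<Rightarrow> real) \<Rightarrow> real" where
  "avg M B f = (LINT y:B|M. f y) / measure M B"

definition avg_nn :: "'a measure \<Rightarrow> 'a set \<Rightarrow> ('a \<Rightarrow> ennreal) \<Rightarrow> ennreal" where
  "avg_nn M B f = (\<integral>\<^sup>+ y\<in>B. f y \<partial>M) / emeasure M B"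

definition weak_poincare :: "'a::metric_space measure \<Rightarrow> real \<Rightarrow> bool" where
  "weak_poincare M p \<longleftrightarrow> (\<exists>CP>0. \<exists>\<sigma>\<ge>1. \<forall>f g x \<rho>.
      \<rho> > 0 \<and> Lp_space M p f \<and> p_weak_upper_gradient M p f g \<longrightarrow>
      avg M (ball x \<rho>) (\<lambda>y. \<bar>f y - avg M (ball x \<rho>) f\<bar>)
        \<le> \<rho> * CP * (avg M (ball x (\<sigma> * \<rho>)) (\<lambda>y. g y powr p)) powr (1 / p))"

definition Lip_fun :: "('a::metric_space \<Rightarrow> 'b::metric_space) \<Rightarrow> bool" where
  "Lip_fun f \<longleftrightarrow> (\<exists>C. C-lipschitz_on UNIV f)"

definition pointwise_Lip :: "('a::metric_space \<Rightarrow> real) \<Rightarrow> 'a \<Rightarrow> ereal" where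
  "pointwise_Lip f x = Limsup (at_right 0) (\<lambda>r. SUP y \<in> cball x r. ereal (\<bar>f y - f x\<bar> / r))"

definition cheeger_differential ::
  "'a::metric_space measure \<Rightarrow> (('a \<Rightarrow> real) \<Rightarrow> 'a \<Rightarrow> real^'n) \<Rightarrow> bool" where
  "cheeger_differential M D \<longleftrightarrow>
     (\<forall>f. Lip_fun f \<longrightarrow> D f \<in> borel_measurable M \<and> (\<exists>B. AE x in M. norm (D f x) \<le> B)) \<and>
     (\<forall>f g. Lip_fun f \<and> Lip_fun g \<longrightarrow> (AE x in M. D (\<lambda>y. f y + g y) x = D f x + D g x)) \<and>
     (\<forall>f c. Lip_fun f \<longrightarrow> (AE x in M. D (\<lambda>y. c * f y) x = c *\<^sub>R D f x)) \<and>
     (\<exists>C\<ge>1. \<forall>f. Lip_fun f \<longrightarrow>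
        (AE x in M. pointwise_Lip f x \<le> ereal C * ereal (norm (D f x)) \<and>
                    ereal (norm (D f x)) \<le> ereal C * pointwise_Lip f x))"

definition grad_mu :: "(('a \<Rightarrow> real) \<Rightarrow> 'a \<Rightarrow> real^'n) \<Rightarrow> ('a \<Rightarrow> real^'m) \<Rightarrow> 'a \<Rightarrow> real^'n^'m" where
  "grad_mu D u y = (\<chi> i. D (\<lambda>z. u z $ i) y)"

text \<open>(w, G) with w \<in> W^{1,p}_{\<mu>,0}(A;R^m) and G = \<nabla>_\<mu> w: the element of the completion is
  represented by its L^p limits w and G of a sequence u_n of Lipschitz maps vanishing off A,
  Cauchy in the W^{1,p} norm.\<close>
definition W1p0_grad ::
  "'a::metric_space measure \<Rightarrow> (('a \<Rightarrow> real) \<Rightarrow> 'a \<Rightarrow> real^'n) \<Rightarrow> real \<Rightarrow> 'a set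
     \<Rightarrow> ('a \<Rightarrow> real^'m) \<Rightarrow> ('a \<Rightarrow> real^'n^'m) \<Rightarrow> bool" where
  "W1p0_grad M D p A w G \<longleftrightarrow> Lp_space M p w \<and> Lp_space M p G \<and>
     (\<exists>u. (\<forall>k. Lip_fun (u k) \<and> (\<forall>y. y \<notin> A \<longrightarrow> u k y = 0)) \<and>
        ((\<lambda>k. \<integral>\<^sup>+ y. ennreal (norm (u k y - w y) powr p) \<partial>M) \<longlonglongrightarrow> 0) \<and>
        ((\<lambda>k. \<integral>\<^sup>+ y. ennreal (norm (grad_mu D (u k) y - G y) powr p) \<partial>M) \<longlonglongrightarrow> 0))"

definition quasiconvexification ::
  "'a::metric_space measure \<Rightarrow> (('a \<Rightarrow> real) \<Rightarrow> 'a \<Rightarrow> real^'n) \<Rightarrow> real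
     \<Rightarrow> ('a \<Rightarrow> real^'n^'m \<Rightarrow> ennreal) \<Rightarrow> 'a \<Rightarrow> real^'n^'m \<Rightarrow> ennreal" where
  "quasiconvexification M D p F x \<xi> =
     Limsup (at_right 0) (\<lambda>\<rho>.
       INF G \<in> {G. \<exists>w. W1p0_grad M D p (ball x \<rho>) w G}.
         avg_nn M (ball x \<rho>) (\<lambda>y. F y (\<xi> + G y)))"

definition Delta :: "('a \<Rightarrow> ennreal) \<Rightarrow> ('a \<Rightarrow> 'v::real_vector \<Rightarrow> ennreal) \<Rightarrow> real \<Rightarrow> ereal" where
  "Delta a F t = (SUP x. SUP \<xi> \<in> {\<xi>. F x \<xi> < \<infinity>}.
      (enn2ereal (F x (t *\<^sub>R \<xi>)) - enn2ereal (F x \<xi>)) / (enn2ereal (a x) + enn2ereal (F x \<xi>)))"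

definition ru_usc :: "'a measure \<Rightarrow> ('a \<Rightarrow> 'v::real_vector \<Rightarrow> ennreal) \<Rightarrow> bool" where
  "ru_usc M F \<longleftrightarrow> (\<exists>a. a \<in> borel_measurable M \<and> (\<forall>x. a x > 0) \<and> (\<integral>\<^sup>+ x. a x \<partial>M) < \<infinity> \<and>
      Limsup (at_left 1) (Delta a F) \<le> 0)"

end

theory Submission
  imports Defs
begin

text \<open>
  If \<open>w\<close> is a competitor in the definition of \<open>\<Q>\<^sub>\<mu>L(x, \<xi>)\<close> on \<open>Q\<^sub>\<rho>(x)\<close>, then \<open>t w\<close> is a
  competitor for \<open>t \<xi>\<close> and \<open>t \<xi> + \<nabla>(t w) = t (\<xi> + \<nabla>w)\<close>.  Averaging the pointwise bound
  \<open>L(y, t \<eta>) \<le> (1 + \<delta>) L(y, \<eta>) + \<delta> a(y)\<close> supplied by the radial upper semicontinuity of \<open>L\<close>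
  therefore gives \<open>\<Q>\<^sub>\<mu>L(x, t \<xi>) \<le> (1 + \<delta>) \<Q>\<^sub>\<mu>L(x, \<xi>) + \<delta> limsup\<^sub>\<rho>\<^sub>\<rightarrow>\<^sub>0 (average of a over Q\<^sub>\<rho>(x))\<close>.
  A Vitali covering argument in the doubling space bounds these upper averages of \<open>a\<close> by
  \<open>2 C\<^sub>d\<^sup>2 a\<close> outside a \<open>\<mu>\<close>-null set; giving the new weight the value \<open>\<infinity>\<close> on that null set
  makes \<open>\<Q>\<^sub>\<mu>L\<close> radially uniformly upper semicontinuous.
\<close>

section \<open>Borel measures on compact metric spaces\<close>

lemma compact_metric_countable_basis:
  assumes "compact (UNIV :: 'a::metric_space set)"
  shows "\<exists>B :: 'a set set. countable B \<and> topological_basis B"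
proof -
  have "\<exists>k::'a set. finite k \<and> UNIV \<subseteq> (\<Union>x\<in>k. ball x (1 / Suc n))" for n :: nat
    using seq_compact_imp_totally_bounded[OF compact_imp_seq_compact[OF assms]] by simp
  then obtain k :: "nat \<Rightarrow> 'a set"
    where k: "\<And>n. finite (k n)" "\<And>n. UNIV \<subseteq> (\<Union>x\<in>k n. ball x (1 / Suc n))"
    by metis
  define B where "B = (\<Union>n. (\<lambda>x. ball x (1 / Suc n)) ` k n)"
  have "countable B"
    unfolding B_def using k(1) by (auto intro: countable_finite)
  moreover have "topological_basis B"
  proof (rule topological_basisI)
    show "open b" if "b \<in> B" for b
      using that by (auto simp: B_def)
  next
    fix O' :: "'a set" and x assume "open O'" "x \<in> O'"
    then obtain e where e: "e > 0" "ball x e \<subseteq> O'"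
      by (meson open_contains_ball)
    then obtain n where n: "1 / real (Suc n) < e / 2"
      by (metis half_gt_zero nat_approx_posE)
    obtain c where c: "c \<in> k n" "x \<in> ball c (1 / Suc n)"
      using k(2)[of n] by blast
    have "ball c (1 / Suc n) \<subseteq> ball x e"
    proof
      fix y assume "y \<in> ball c (1 / Suc n)"
      then have "dist x y < 1 / Suc n + 1 / Suc n"
        using c dist_triangle[of x y c] by (simp add: dist_commute)
      with n show "y \<in> ball x e" by simp
    qed
    with c e show "\<exists>b\<in>B. x \<in> b \<and> b \<subseteq> O'"
      by (auto simp: B_def)
  qed
  ultimately show ?thesis by blast
qed

text \<open>On a general metric space the Borel sets of a product need not be generated by
  rectangles; a countable basis of the first factor is enough.\<close>

lemma measurable_Pair_compact_metric:
  fixes f :: "'b \<Rightarrow> 'a::metric_space" and g :: "'b \<Rightarrow> 'c::second_countable_topology"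
  assumes "compact (UNIV :: 'a set)"
    and [measurable]: "f \<in> borel_measurable M" "g \<in> borel_measurable M"
  shows "(\<lambda>x. (f x, g x)) \<in> borel_measurable M"
proof -
  obtain A :: "'a set set" where A: "countable A" "topological_basis A"
    using compact_metric_countable_basis[OF assms(1)] by blast
  obtain C :: "'c set set" where C: "countable C" "topological_basis C"
    using ex_countable_basis by blast
  let ?P = "(\<lambda>(a, c). a \<times> c) ` (A \<times> C)"
  have "borel = sigma UNIV ?P"
    using A C by (intro borel_eq_countable_basis countable_image topological_basis_prod) auto
  then show ?thesis
  proof (elim ssubst, intro measurable_measure_of)
    fix S assume "S \<in> ?P"
    then obtain a c where "a \<in> A" "c \<in> C" and S: "S = a \<times> c" by auto
    then have "open a" "open c"
      using A C by (auto intro: topological_basis_open)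
    then have "(f -` a \<inter> space M) \<inter> (g -` c \<inter> space M) \<in> sets M"
      by simp
    then show "(\<lambda>x. (f x, g x)) -` S \<inter> space M \<in> sets M"
      unfolding S by (simp add: vimage_def Int_def conj_ac)
  qed auto
qed

definition closed_open_approximable :: "'a::topological_space measure \<Rightarrow> 'a set \<Rightarrow> bool" where
  "closed_open_approximable M B \<longleftrightarrow>
    (\<forall>e>0. \<exists>F U. closed F \<and> open U \<and> F \<subseteq> B \<and> B \<subseteq> U \<and> measure M (U - F) < e)"

lemma closed_open_approximable_closed:
  fixes M :: "'a::metric_space measure"
  assumes M: "finite_measure M" "sets M = sets borel" and B: "closed B"
  shows "closed_open_approximable M B"
proof -
  interpret finite_measure M by (fact M(1))
  define U where "U n = (\<Union>x\<in>B. ball x (1 / Suc n))" for n :: nat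
  have U_open: "open (U n)" and U: "B \<subseteq> U n" for n
    by (auto simp: U_def)
  have U_sets: "U n \<in> sets M" for n
    using M(2) U_open by (simp add: borel_open)
  have "(\<Inter>n. U n) \<subseteq> B"
  proof
    fix x assume x: "x \<in> (\<Inter>n. U n)"
    have "\<exists>y\<in>B. dist y x < e" if "e > 0" for e
    proof -
      obtain n where n: "1 / real (Suc n) < e" using \<open>e > 0\<close> by (rule nat_approx_posE)
      from x obtain y where "y \<in> B" "dist y x < 1 / Suc n" by (auto simp: U_def)
      with n show ?thesis by (meson less_trans)
    qed
    then show "x \<in> B" using B closed_approachable by blast
  qed
  with U have "(\<Inter>n. U n) = B" by blast
  moreover have "decseq U"
    unfolding decseq_def U_def by (intro allI impI UN_mono order.refl subset_ball) (simp add: frac_le)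
  ultimately have "(\<lambda>n. measure M (U n)) \<longlonglongrightarrow> measure M B"
    using finite_Lim_measure_decseq[of U] U_sets by auto
  moreover have "measure M (U n - B) = measure M (U n) - measure M B" for n
    using U U_sets B M(2) by (intro finite_measure_Diff) auto
  ultimately have "(\<lambda>n. measure M (U n - B)) \<longlonglongrightarrow> 0"
    using LIM_zero by force
  show ?thesis unfolding closed_open_approximable_def
  proof (intro allI impI)
    fix e :: real assume "e > 0"
    have "\<forall>\<^sub>F n in sequentially. measure M (U n - B) < e"
      using order_tendstoD(2)[OF \<open>(\<lambda>n. measure M (U n - B)) \<longlonglongrightarrow> 0\<close>] \<open>e > 0\<close> by simp
    then obtain n where "measure M (U n - B) < e"
      using eventually_happens'[OF sequentially_bot] by blast
    with B U U_open show "\<exists>F U. closed F \<and> open U \<and> F \<subseteq> B \<and> B \<subseteq> U \<and> measure M (U - F) < e"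
      by blast
  qed
qed

lemma closed_open_approximable_Compl:
  assumes "closed_open_approximable M B"
  shows "closed_open_approximable M (UNIV - B)"
  unfolding closed_open_approximable_def
proof (intro allI impI)
  fix e :: real assume "e > 0"
  then obtain F U where "closed F" "open U" "F \<subseteq> B" "B \<subseteq> U" "measure M (U - F) < e"
    using assms by (auto simp: closed_open_approximable_def)
  moreover have "(UNIV - F) - (UNIV - U) = U - F"
    by blast
  ultimately show "\<exists>F' U'. closed F' \<and> open U' \<and> F' \<subseteq> UNIV - B \<and> UNIV - B \<subseteq> U'
      \<and> measure M (U' - F') < e"
    by (intro exI[of _ "UNIV - U"] exI[of _ "UNIV - F"]) (auto simp: closed_Diff open_Diff)
qed

lemma (in finite_measure) ex_measure_UN_minus_finite_UN_less:
  fixes A :: "nat \<Rightarrow> 'a set"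
  assumes "\<And>i. A i \<in> sets M" "0 < e"
  shows "\<exists>n. measure M ((\<Union>i. A i) - (\<Union>i<n. A i)) < e"
proof -
  have "incseq (\<lambda>n. \<Union>i<n. A i)"
    by (intro monoI UN_mono) auto
  moreover have "(\<Union>n. \<Union>i<n. A i) = (\<Union>i. A i)"
    by (auto intro: lessI)
  ultimately have "(\<lambda>n. measure M (\<Union>i<n. A i)) \<longlonglongrightarrow> measure M (\<Union>i. A i)"
    using finite_Lim_measure_incseq[of "\<lambda>n. \<Union>i<n. A i"] assms(1)
    by (simp add: image_subset_iff sets.finite_UN)
  then have "\<forall>\<^sub>F n in sequentially. measure M (\<Union>i. A i) - e < measure M (\<Union>i<n. A i)"
    using assms(2) by (intro order_tendstoD(1)) auto
  then obtain n where "measure M (\<Union>i. A i) - e < measure M (\<Union>i<n. A i)"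
    using eventually_happens'[OF sequentially_bot] by blast
  moreover have "measure M ((\<Union>i. A i) - (\<Union>i<n. A i)) = measure M (\<Union>i. A i) - measure M (\<Union>i<n. A i)"
    using assms(1) by (intro finite_measure_Diff sets.countable_UN sets.finite_UN) auto
  ultimately have "measure M ((\<Union>i. A i) - (\<Union>i<n. A i)) < e"
    by simp
  then show ?thesis ..
qed

lemma (in finite_measure) measure_UN_le_sums:
  fixes A :: "nat \<Rightarrow> 'a set"
  assumes "\<And>i. A i \<in> sets M" "\<And>i. measure M (A i) \<le> \<epsilon> i" "\<epsilon> sums c"
  shows "measure M (\<Union>i. A i) \<le> c"
proof -
  have summable: "summable (\<lambda>i. measure M (A i))"
    using assms(2) by (intro summable_comparison_test'[OF sums_summable[OF assms(3)]]) simp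
  then have "measure M (\<Union>i. A i) \<le> (\<Sum>i. measure M (A i))"
    using assms(1) by (intro finite_measure_subadditive_countably) auto
  also have "\<dots> \<le> c"
    using assms(2,3) summable by (intro sums_le[OF _ summable_sums]) simp_all
  finally show ?thesis .
qed

lemma closed_open_approximable_countable_UN:
  fixes M :: "'a::metric_space measure" and A :: "nat \<Rightarrow> 'a set"
  assumes M: "finite_measure M" "sets M = sets borel"
    and A: "\<And>i. A i \<in> sets M" "\<And>i. closed_open_approximable M (A i)"
  shows "closed_open_approximable M (\<Union>i. A i)"
  unfolding closed_open_approximable_def
proof (intro allI impI)
  interpret finite_measure M by (fact M(1))
  fix e :: real assume "e > 0"
  define \<epsilon> where "\<epsilon> i = e / 4 * (1 / 2) ^ i" for i :: nat
  have "\<epsilon> sums (e / 4 * (1 / (1 - 1 / 2)))"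
    unfolding \<epsilon>_def by (intro sums_mult geometric_sums) simp
  then have "\<epsilon> sums (e / 2)"
    by simp
  have "\<epsilon> i > 0" for i
    using \<open>e > 0\<close> by (simp add: \<epsilon>_def)
  then have "\<forall>i. \<exists>F U. closed F \<and> open U \<and> F \<subseteq> A i \<and> A i \<subseteq> U \<and> measure M (U - F) < \<epsilon> i"
    using A(2) unfolding closed_open_approximable_def by blast
  then obtain F U where FU: "\<And>i. closed (F i)" "\<And>i. open (U i)" "\<And>i. F i \<subseteq> A i"
      "\<And>i. A i \<subseteq> U i" "\<And>i. measure M (U i - F i) < \<epsilon> i"
    by metis
  have "U i \<in> sets M" "F i \<in> sets M" for i
    using FU(1,2) M(2) by (simp_all add: borel_open borel_closed)
  then have FU_sets: "U i - F i \<in> sets M" for i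
    by blast
  have "0 < e / 2"
    using \<open>e > 0\<close> by simp
  from ex_measure_UN_minus_finite_UN_less[OF A(1) this]
  obtain n where n: "measure M ((\<Union>i. A i) - (\<Union>i<n. A i)) < e / 2" ..
  have sets: "(\<Union>i. U i - F i) \<in> sets M" "(\<Union>i. A i) - (\<Union>i<n. A i) \<in> sets M"
    using FU_sets A(1) by auto
  have "(\<Union>i. U i) - (\<Union>i<n. F i) \<subseteq> (\<Union>i. U i - F i) \<union> ((\<Union>i. A i) - (\<Union>i<n. A i))"
    using FU(3,4) by blast
  then have "measure M ((\<Union>i. U i) - (\<Union>i<n. F i))
      \<le> measure M ((\<Union>i. U i - F i) \<union> ((\<Union>i. A i) - (\<Union>i<n. A i)))"
    using sets by (intro finite_measure_mono) auto
  also have "\<dots> \<le> measure M (\<Union>i. U i - F i) + measure M ((\<Union>i. A i) - (\<Union>i<n. A i))"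
    using sets by (rule measure_Un_le)
  also have "measure M (\<Union>i. U i - F i) \<le> e / 2"
    using FU_sets FU(5) \<open>\<epsilon> sums (e / 2)\<close> by (intro measure_UN_le_sums less_imp_le)
  finally have "measure M ((\<Union>i. U i) - (\<Union>i<n. F i)) < e"
    using n by simp
  moreover have "closed (\<Union>i<n. F i)" "open (\<Union>i. U i)"
    using FU(1,2) by auto
  moreover have "(\<Union>i<n. F i) \<subseteq> (\<Union>i. A i)" "(\<Union>i. A i) \<subseteq> (\<Union>i. U i)"
    using FU(3,4) by blast+
  ultimately show "\<exists>F U. closed F \<and> open U \<and> F \<subseteq> (\<Union>i. A i) \<and> (\<Union>i. A i) \<subseteq> U
      \<and> measure M (U - F) < e"
    by blast
qed

lemma closed_open_approximation:
  fixes M :: "'a::metric_space measure"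
  assumes M: "finite_measure M" "sets M = sets borel" and B: "B \<in> sets M"
  shows "closed_open_approximable M B"
proof -
  have "B \<in> sigma_sets UNIV (Collect closed)"
    using B M(2) by (simp add: borel_eq_closed)
  then show ?thesis
  proof induction
    case (Basic B)
    then show ?case
      using M by (simp add: closed_open_approximable_closed)
  next
    case Empty
    then show ?case
      by (simp add: closed_open_approximable_closed[OF M])
  next
    case (Compl B)
    then show ?case
      by (intro closed_open_approximable_Compl)
  next
    case (Union A)
    moreover have "A i \<in> sets M" for i
      using Union.hyps M(2) by (simp add: borel_eq_closed)
    ultimately show ?case
      using M by (simp add: closed_open_approximable_countable_UN)
  qed
qed

lemma (in finite_measure) measurable_hull:
  assumes "E \<subseteq> space M"
  shows "\<exists>W\<in>sets M. E \<subseteq> W \<and> (\<forall>W'\<in>sets M. E \<subseteq> W' \<longrightarrow> emeasure M W \<le> emeasure M W')"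
proof -
  define m where "m = (INF W \<in> {W\<in>sets M. E \<subseteq> W}. emeasure M W)"
  have "m \<le> emeasure M (space M)"
    unfolding m_def using assms by (intro INF_lower) auto
  then have "m < top"
    by (meson emeasure_finite less_top order.strict_trans1)
  have "\<exists>W\<in>{W\<in>sets M. E \<subseteq> W}. emeasure M W < m + ennreal (1 / Suc n)" for n :: nat
  proof -
    have "m < m + ennreal (1 / Suc n)"
      using \<open>m < top\<close> by (simp add: ennreal_add_left_cancel_less less_top[symmetric])
    then show ?thesis
      unfolding m_def by (simp add: INF_less_iff)
  qed
  then obtain Wn where Wn: "\<And>n. Wn n \<in> sets M" "\<And>n. E \<subseteq> Wn n"
      "\<And>n. emeasure M (Wn n) < m + ennreal (1 / Suc n)"
    by (metis (no_types, lifting) mem_Collect_eq)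
  define W where "W = (\<Inter>n. Wn n)"
  have "W \<in> sets M" "E \<subseteq> W"
    unfolding W_def using Wn(1,2) by auto
  moreover have "emeasure M W \<le> m"
  proof (rule ennreal_le_epsilon)
    fix e :: real assume "0 < e"
    then obtain n where n: "1 / real (Suc n) < e"
      by (rule nat_approx_posE)
    have "emeasure M W \<le> emeasure M (Wn n)"
      using Wn(1) by (intro emeasure_mono) (auto simp: W_def)
    also have "\<dots> \<le> m + ennreal (1 / Suc n)"
      using Wn(3)[of n] by simp
    also have "\<dots> \<le> m + ennreal e"
      using n by (intro add_left_mono ennreal_leI) simp
    finally show "emeasure M W \<le> m + ennreal e" .
  qed
  moreover have "\<forall>W'\<in>sets M. E \<subseteq> W' \<longrightarrow> m \<le> emeasure M W'"
    unfolding m_def by (auto intro: INF_lower)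
  ultimately show ?thesis
    by (meson order_trans)
qed

lemma finite_Vitali_covering:
  fixes c :: "'i \<Rightarrow> 'a::metric_space" and r :: "'i \<Rightarrow> real"
  assumes "finite I" "\<And>i. i \<in> I \<Longrightarrow> 0 < r i"
  shows "\<exists>J\<subseteq>I. pairwise (\<lambda>i j. disjnt (ball (c i) (r i)) (ball (c j) (r j))) J \<and>
           (\<Union>i\<in>I. ball (c i) (r i)) \<subseteq> (\<Union>j\<in>J. ball (c j) (3 * r j))"
  using assms
proof (induction "card I" arbitrary: I rule: less_induct)
  case less
  show ?case
  proof (cases "I = {}")
    case False
    obtain i0 where i0: "i0 \<in> I" "\<And>i. i \<in> I \<Longrightarrow> r i \<le> r i0"
      using Max_in[of "r ` I"] Max_ge[of "r ` I"] less.prems(1) False by fastforce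
    define I' where "I' = {i\<in>I. disjnt (ball (c i) (r i)) (ball (c i0) (r i0))}"
    have "i0 \<notin> I'"
      using less.prems(2)[OF i0(1)] by (auto simp: I'_def disjnt_def)
    then have "I' \<subset> I"
      using i0(1) unfolding I'_def by blast
    then have "card I' < card I" "finite I'"
      using less.prems(1) by (auto intro: psubset_card_mono finite_subset)
    then obtain J' where J': "J' \<subseteq> I'"
        "pairwise (\<lambda>i j. disjnt (ball (c i) (r i)) (ball (c j) (r j))) J'"
        "(\<Union>i\<in>I'. ball (c i) (r i)) \<subseteq> (\<Union>j\<in>J'. ball (c j) (3 * r j))"
      using less.hyps[of I'] less.prems(2) \<open>I' \<subset> I\<close> by blast
    have "ball (c i) (r i) \<subseteq> ball (c i0) (3 * r i0)" if i: "i \<in> I - I'" for i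
    proof
      fix y assume y: "y \<in> ball (c i) (r i)"
      obtain z where z: "z \<in> ball (c i) (r i)" "z \<in> ball (c i0) (r i0)"
        using i unfolding I'_def disjnt_def by blast
      have "dist (c i0) y \<le> dist (c i0) z + dist z (c i) + dist (c i) y"
        using dist_triangle[of "c i0" y z] dist_triangle[of z y "c i"] by linarith
      also have "\<dots> < r i0 + r i + r i"
        using z y by (simp add: dist_commute)
      also have "\<dots> \<le> 3 * r i0"
        using i0(2)[of i] i by simp
      finally show "y \<in> ball (c i0) (3 * r i0)" by simp
    qed
    then have "(\<Union>i\<in>I. ball (c i) (r i)) \<subseteq> (\<Union>j\<in>insert i0 J'. ball (c j) (3 * r j))"
      using J'(3) by blast
    moreover have "pairwise (\<lambda>i j. disjnt (ball (c i) (r i)) (ball (c j) (r j))) (insert i0 J')"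
      using J'(1,2) by (auto simp: pairwise_insert I'_def disjnt_sym)
    moreover have "insert i0 J' \<subseteq> I"
      using J'(1) i0(1) \<open>I' \<subset> I\<close> by blast
    ultimately show ?thesis by blast
  qed simp
qed

lemma emeasure_density_le_const:
  assumes "a \<in> borel_measurable M" "W \<in> sets M" "\<And>x. x \<in> W \<Longrightarrow> a x \<le> c"
  shows "emeasure (density M a) W \<le> c * emeasure M W"
proof -
  have "emeasure (density M a) W = (\<integral>\<^sup>+x. a x * indicator W x \<partial>M)"
    using assms(1,2) by (simp add: emeasure_density)
  also have "\<dots> \<le> (\<integral>\<^sup>+x. c * indicator W x \<partial>M)"
    using assms(3) by (intro nn_integral_mono) (auto simp: indicator_def)
  also have "\<dots> = c * emeasure M W"
    using assms(2) by (rule nn_integral_cmult_indicator)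
  finally show ?thesis .
qed

section \<open>Upper averages of an integrable weight in a doubling space\<close>

lemma ex_rat_between_ennreal:
  fixes u v :: ennreal
  assumes "ennreal K * u < v" "0 < K"
  shows "\<exists>q::rat. 0 < q \<and> u < ennreal (of_rat q) \<and> ennreal (K * of_rat q) < v"
proof -
  obtain b where b: "ennreal K * u < ennreal b" "ennreal b < v"
    using assms(1) by (metis dense ennreal_cases less_imp_le not_le top_greatest)
  then have "u \<noteq> \<infinity>"
    using assms(2) by (auto simp: ennreal_mult_top)
  then obtain u0 where u0: "0 \<le> u0" "u = ennreal u0"
    by (cases u) auto
  with b(1) assms(2) have "K * u0 < b"
    by (simp add: ennreal_mult[symmetric] ennreal_less_iff)
  then have "u0 < b / K"
    using assms(2) by (simp add: field_simps)
  then obtain q where q: "u0 < of_rat q" "of_rat q < b / K"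
    using of_rat_dense by blast
  then have "0 < (of_rat q :: real)"
    using u0(1) by linarith
  moreover have "K * of_rat q < K * (b / K)"
    using q(2) assms(2) by (rule mult_strict_left_mono)
  ultimately have "ennreal (K * of_rat q) < v"
    using assms(2) b(2) by (simp add: ennreal_less_iff less_trans[of _ "ennreal b"])
  with q(1) u0 \<open>0 < (of_rat q :: real)\<close> show ?thesis
    by (auto simp: ennreal_less_iff)
qed

definition upper_average :: "'a::metric_space measure \<Rightarrow> ('a \<Rightarrow> ennreal) \<Rightarrow> 'a \<Rightarrow> ennreal" where
  "upper_average M f x = Limsup (at_right 0) (\<lambda>\<rho>. avg_nn M (ball x \<rho>) f)"

locale compact_doubling_space = finite_measure M for M :: "'a::metric_space measure" +
  fixes C :: real
  assumes compact_UNIV: "compact (UNIV :: 'a set)"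
    and sets_M: "sets M = sets borel"
    and doubling_constant: "1 \<le> C"
    and doubling: "\<And>x \<rho>. 0 < \<rho> \<Longrightarrow> emeasure M (ball x \<rho>) \<le> ennreal C * emeasure M (ball x (\<rho> / 2))"
begin

lemma space_M [simp]: "space M = UNIV"
  using sets_eq_imp_space_eq[OF sets_M] by simp

lemma borel_sets_M: "S \<in> sets borel \<Longrightarrow> S \<in> sets M"
  using sets_M by simp

lemma open_sets_M [simp]: "open S \<Longrightarrow> S \<in> sets M"
  by (simp add: borel_sets_M)

lemma emeasure_ball_triple:
  assumes "0 < \<rho>"
  shows "emeasure M (ball x (3 * \<rho>)) \<le> ennreal (C\<^sup>2) * emeasure M (ball x \<rho>)"
proof -
  have "emeasure M (ball x (3 * \<rho>)) \<le> emeasure M (ball x (4 * \<rho>))"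
    using assms by (intro emeasure_mono subset_ball) (auto simp: sets_M)
  also have "\<dots> \<le> ennreal C * emeasure M (ball x (2 * \<rho>))"
    using doubling[of "4 * \<rho>" x] assms by simp
  also have "\<dots> \<le> ennreal C * (ennreal C * emeasure M (ball x \<rho>))"
    using doubling[of "2 * \<rho>" x] assms by (intro mult_left_mono) auto
  also have "\<dots> = ennreal (C\<^sup>2) * emeasure M (ball x \<rho>)"
    using doubling_constant by (simp add: power2_eq_square ennreal_mult mult.assoc)
  finally show ?thesis .
qed

text \<open>A superlevel set of the maximal function of \<open>\<nu>\<close> with respect to \<open>M\<close>, localised to \<open>U\<close>.\<close>

definition heavy_balls :: "real \<Rightarrow> 'a measure \<Rightarrow> 'a set \<Rightarrow> 'a set" where
  "heavy_balls s \<nu> U = (\<Union>{ball y \<rho> | y \<rho>. 0 < \<rho> \<and> ball y \<rho> \<subseteq> U \<and>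
      ennreal s * emeasure M (ball y \<rho>) \<le> emeasure \<nu> (ball y \<rho>)})"

lemma open_heavy_balls: "open (heavy_balls s \<nu> U)"
  unfolding heavy_balls_def by auto

lemma disjoint_heavy_balls_le:
  assumes \<nu>: "sets \<nu> = sets borel" and U: "open U" and J: "finite J"
    "pairwise (\<lambda>i j. disjnt (ball (fst i) (snd i)) (ball (fst j) (snd j))) J"
    and heavy: "\<And>j. j \<in> J \<Longrightarrow> 0 < snd j \<and> ball (fst j) (snd j) \<subseteq> U \<and>
      ennreal s * emeasure M (ball (fst j) (snd j)) \<le> emeasure \<nu> (ball (fst j) (snd j))"
  shows "ennreal s * emeasure M (\<Union>j\<in>J. ball (fst j) (3 * snd j)) \<le> ennreal (C\<^sup>2) * emeasure \<nu> U"
proof -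
  have "ennreal s * emeasure M (\<Union>j\<in>J. ball (fst j) (3 * snd j))
      \<le> ennreal s * (\<Sum>j\<in>J. emeasure M (ball (fst j) (3 * snd j)))"
    using J(1) by (intro mult_left_mono emeasure_subadditive_finite) auto
  also have "\<dots> \<le> ennreal s * (\<Sum>j\<in>J. ennreal (C\<^sup>2) * emeasure M (ball (fst j) (snd j)))"
    using heavy by (intro mult_left_mono sum_mono emeasure_ball_triple) auto
  also have "\<dots> = ennreal (C\<^sup>2) * (\<Sum>j\<in>J. ennreal s * emeasure M (ball (fst j) (snd j)))"
    by (simp add: sum_distrib_left mult.left_commute)
  also have "\<dots> \<le> ennreal (C\<^sup>2) * (\<Sum>j\<in>J. emeasure \<nu> (ball (fst j) (snd j)))"
    using heavy by (intro mult_left_mono sum_mono) auto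
  also have "(\<Sum>j\<in>J. emeasure \<nu> (ball (fst j) (snd j))) = emeasure \<nu> (\<Union>j\<in>J. ball (fst j) (snd j))"
    using J \<nu> by (intro sum_emeasure) (auto simp: disjoint_family_on_def pairwise_def disjnt_def)
  also have "\<dots> \<le> emeasure \<nu> U"
    using heavy U \<nu> by (intro emeasure_mono UN_least) auto
  finally show ?thesis
    by (simp add: mult_left_mono)
qed

lemma compact_heavy_balls_le:
  assumes \<nu>: "sets \<nu> = sets borel" and U: "open U"
    and K: "compact K" "K \<subseteq> heavy_balls s \<nu> U"
  shows "ennreal s * emeasure M K \<le> ennreal (C\<^sup>2) * emeasure \<nu> U"
proof -
  define I where "I = {(y, \<rho>). 0 < \<rho> \<and> ball y \<rho> \<subseteq> U \<and>
      ennreal s * emeasure M (ball y \<rho>) \<le> emeasure \<nu> (ball y \<rho>)}"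
  have "K \<subseteq> (\<Union>i\<in>I. ball (fst i) (snd i))"
  proof
    fix x assume "x \<in> K"
    then obtain y \<rho> where "x \<in> ball y \<rho>" "0 < \<rho>" "ball y \<rho> \<subseteq> U"
        "ennreal s * emeasure M (ball y \<rho>) \<le> emeasure \<nu> (ball y \<rho>)"
      using K(2) unfolding heavy_balls_def by blast
    then show "x \<in> (\<Union>i\<in>I. ball (fst i) (snd i))"
      unfolding I_def by (intro UN_I[of "(y, \<rho>)"]) auto
  qed
  then obtain I0 where I0: "I0 \<subseteq> I" "finite I0" "K \<subseteq> (\<Union>i\<in>I0. ball (fst i) (snd i))"
    using compactE_image[OF K(1), of I "\<lambda>i. ball (fst i) (snd i)"] by auto
  have heavy: "0 < snd i \<and> ball (fst i) (snd i) \<subseteq> U \<and>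
      ennreal s * emeasure M (ball (fst i) (snd i)) \<le> emeasure \<nu> (ball (fst i) (snd i))"
    if "i \<in> I0" for i
    using subsetD[OF I0(1) that] by (auto simp: I_def case_prod_beta)
  then obtain J where J: "J \<subseteq> I0"
      "pairwise (\<lambda>i j. disjnt (ball (fst i) (snd i)) (ball (fst j) (snd j))) J"
      "(\<Union>i\<in>I0. ball (fst i) (snd i)) \<subseteq> (\<Union>j\<in>J. ball (fst j) (3 * snd j))"
    using finite_Vitali_covering[of I0 snd fst] I0(2) by blast
  have "ennreal s * emeasure M K \<le> ennreal s * emeasure M (\<Union>j\<in>J. ball (fst j) (3 * snd j))"
    using I0(3) J(3) by (intro mult_left_mono emeasure_mono open_sets_M) auto
  also have "\<dots> \<le> ennreal (C\<^sup>2) * emeasure \<nu> U"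
    using J(1) I0(2) heavy by (intro disjoint_heavy_balls_le[OF \<nu> U _ J(2)]) (auto intro: finite_subset)
  finally show ?thesis .
qed

lemma heavy_balls_le:
  assumes \<nu>: "sets \<nu> = sets borel" and U: "open U"
  shows "ennreal s * emeasure M (heavy_balls s \<nu> U) \<le> ennreal (C\<^sup>2) * emeasure \<nu> U"
proof (cases "s > 0")
  case True
  show ?thesis
  proof (rule ennreal_le_epsilon)
    fix e :: real assume "0 < e"
    have "closed_open_approximable M (heavy_balls s \<nu> U)"
      using finite_measure_axioms sets_M by (rule closed_open_approximation) (simp add: open_heavy_balls)
    moreover have "0 < e / s"
      using \<open>0 < e\<close> True by simp
    ultimately obtain F V where F: "closed F" "open V" "F \<subseteq> heavy_balls s \<nu> U"
        "heavy_balls s \<nu> U \<subseteq> V" "measure M (V - F) < e / s"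
      unfolding closed_open_approximable_def by auto
    have "compact F"
      using F(1) compact_UNIV by (rule closed_Int_compact[of _ UNIV, simplified])
    have F_sets: "F \<in> sets M" "V - F \<in> sets M"
      using F(1,2) by (auto intro!: borel_sets_M)
    have "emeasure M (heavy_balls s \<nu> U) \<le> emeasure M (F \<union> (V - F))"
      using F(4) F_sets by (intro emeasure_mono sets.Un) auto
    also have "\<dots> \<le> emeasure M F + emeasure M (V - F)"
      using F_sets by (rule emeasure_subadditive)
    also have "\<dots> \<le> emeasure M F + ennreal (e / s)"
      using F(5) by (simp add: emeasure_eq_measure ennreal_leI)
    finally have "ennreal s * emeasure M (heavy_balls s \<nu> U) \<le> ennreal s * (emeasure M F + ennreal (e / s))"
      by (rule mult_left_mono) simp
    also have "\<dots> = ennreal s * emeasure M F + ennreal e"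
      using True by (simp add: distrib_left ennreal_mult'[symmetric])
    also have "\<dots> \<le> ennreal (C\<^sup>2) * emeasure \<nu> U + ennreal e"
      using compact_heavy_balls_le[OF \<nu> U \<open>compact F\<close> F(3)] by (rule add_right_mono)
    finally show "ennreal s * emeasure M (heavy_balls s \<nu> U) \<le> ennreal (C\<^sup>2) * emeasure \<nu> U + ennreal e" .
  qed
qed (simp add: ennreal_neg)

definition heavy_points :: "real \<Rightarrow> 'a measure \<Rightarrow> 'a set" where
  "heavy_points s \<nu> =
    {x. \<exists>\<^sub>F \<rho> in at_right 0. ennreal s * emeasure M (ball x \<rho>) \<le> emeasure \<nu> (ball x \<rho>)}"

lemma heavy_points_subset_heavy_balls:
  assumes "x \<in> heavy_points s \<nu>" "x \<in> U" "open U"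
  shows "x \<in> heavy_balls s \<nu> U"
proof -
  obtain \<epsilon> where "0 < \<epsilon>" "ball x \<epsilon> \<subseteq> U"
    using assms(2,3) open_contains_ball by blast
  have "\<forall>\<^sub>F \<rho> in at_right 0. 0 < \<rho> \<and> \<rho> < \<epsilon>"
    using \<open>0 < \<epsilon>\<close> by (auto simp: eventually_at_right_field)
  with assms(1) obtain \<rho> where \<rho>: "0 < \<rho>" "\<rho> < \<epsilon>"
      "ennreal s * emeasure M (ball x \<rho>) \<le> emeasure \<nu> (ball x \<rho>)"
    unfolding heavy_points_def using frequently_ex[OF frequently_eventually_frequently] by blast
  then have "ball x \<rho> \<subseteq> U"
    using \<open>ball x \<epsilon> \<subseteq> U\<close> by auto
  with \<rho> show ?thesis
    unfolding heavy_balls_def by (intro UnionI[of "ball x \<rho>"]) auto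
qed

text \<open>Outer regularity of \<open>\<nu>\<close> at \<open>W\<close> lets us
  apply \<open>heavy_balls_le\<close> to open sets of almost the same \<open>\<nu>\<close>-measure.\<close>

lemma hull_of_heavy_points_le:
  assumes \<nu>: "finite_measure \<nu>" "sets \<nu> = sets borel"
    and W: "W \<in> sets M" "E \<subseteq> W" "E \<subseteq> heavy_points s \<nu>"
    and hull: "\<And>W'. W' \<in> sets M \<Longrightarrow> E \<subseteq> W' \<Longrightarrow> emeasure M W \<le> emeasure M W'"
  shows "ennreal s * emeasure M W \<le> ennreal (C\<^sup>2) * emeasure \<nu> W"
proof (rule ennreal_le_epsilon)
  fix e :: real assume "0 < e"
  have "W \<in> sets \<nu>"
    using W(1) \<nu>(2) sets_M by simp
  then have "closed_open_approximable \<nu> W"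
    using \<nu> by (intro closed_open_approximation)
  moreover have "0 < e / C\<^sup>2"
    using \<open>0 < e\<close> doubling_constant by simp
  ultimately obtain F U where U: "closed F" "open U" "F \<subseteq> W" "W \<subseteq> U" "measure \<nu> (U - F) < e / C\<^sup>2"
    unfolding closed_open_approximable_def by auto
  have UF: "U - F \<in> sets \<nu>"
    using U(1,2) \<nu>(2) by (simp add: sets.Diff)
  have "E \<subseteq> heavy_balls s \<nu> U"
    using W(2,3) U(2,4) heavy_points_subset_heavy_balls by blast
  then have "emeasure M W \<le> emeasure M (heavy_balls s \<nu> U)"
    by (intro hull) (simp_all add: open_heavy_balls)
  then have "ennreal s * emeasure M W \<le> ennreal s * emeasure M (heavy_balls s \<nu> U)"
    by (rule mult_left_mono) simp
  also have "\<dots> \<le> ennreal (C\<^sup>2) * emeasure \<nu> U"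
    using \<nu>(2) U(2) by (rule heavy_balls_le)
  also have "emeasure \<nu> U \<le> emeasure \<nu> (W \<union> (U - F))"
    using U(3) UF \<open>W \<in> sets \<nu>\<close> by (intro emeasure_mono) auto
  also have "\<dots> \<le> emeasure \<nu> W + emeasure \<nu> (U - F)"
    using \<open>W \<in> sets \<nu>\<close> UF by (rule emeasure_subadditive)
  also have "emeasure \<nu> (U - F) \<le> ennreal (e / C\<^sup>2)"
    using U(5) finite_measure.emeasure_eq_measure[OF \<nu>(1)] by (simp add: ennreal_leI)
  finally have "ennreal s * emeasure M W \<le> ennreal (C\<^sup>2) * (emeasure \<nu> W + ennreal (e / C\<^sup>2))"
    by (simp add: mult_left_mono add_left_mono)
  also have "\<dots> = ennreal (C\<^sup>2) * emeasure \<nu> W + ennreal e"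
    using doubling_constant by (simp add: distrib_left ennreal_mult'[symmetric])
  finally show "ennreal s * emeasure M W \<le> ennreal (C\<^sup>2) * emeasure \<nu> W + ennreal e" .
qed

lemma null_set_of_low_heavy_points:
  assumes a: "a \<in> borel_measurable M" "(\<integral>\<^sup>+x. a x \<partial>M) < \<infinity>"
    and r: "0 \<le> r" and s: "C\<^sup>2 * r < s"
  shows "\<exists>N\<in>null_sets M. {x. a x < ennreal r} \<inter> heavy_points s (density M a) \<subseteq> N"
proof -
  define \<nu> where "\<nu> = density M a"
  define E where "E = {x. a x < ennreal r} \<inter> heavy_points s \<nu>"
  have "finite_measure \<nu>"
    using a by (intro finite_measureI) (simp add: \<nu>_def emeasure_density)
  \<comment> \<open>\<open>E\<close> need not be measurable, so we pass to a measurable hull.\<close>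
  obtain W0 where W0: "W0 \<in> sets M" "E \<subseteq> W0"
      "\<And>W'. W' \<in> sets M \<Longrightarrow> E \<subseteq> W' \<Longrightarrow> emeasure M W0 \<le> emeasure M W'"
    using measurable_hull[of E] by auto
  define W where "W = W0 \<inter> {x. a x < ennreal r}"
  have "{x\<in>space M. a x < ennreal r} \<in> sets M"
    using a(1) by measurable
  then have W: "W \<in> sets M"
    using W0(1) by (simp add: W_def)
  have "E \<subseteq> W"
    using W0(2) by (auto simp: W_def E_def)
  have "emeasure M W \<le> emeasure M W'" if "W' \<in> sets M" "E \<subseteq> W'" for W'
  proof -
    have "emeasure M W \<le> emeasure M W0"
      using W0(1) by (intro emeasure_mono) (auto simp: W_def)
    also have "\<dots> \<le> emeasure M W'"
      using W0(3) that .
    finally show ?thesis .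
  qed
  then have "ennreal s * emeasure M W \<le> ennreal (C\<^sup>2) * emeasure \<nu> W"
    using \<open>finite_measure \<nu>\<close> W \<open>E \<subseteq> W\<close>
    by (intro hull_of_heavy_points_le) (auto simp: \<nu>_def sets_M E_def)
  also have "emeasure \<nu> W \<le> ennreal r * emeasure M W"
    unfolding \<nu>_def using a(1) W by (rule emeasure_density_le_const) (auto simp: W_def less_imp_le)
  finally have "ennreal s * measure M W \<le> ennreal (C\<^sup>2 * r) * measure M W"
    using r by (simp add: emeasure_eq_measure ennreal_mult mult.assoc mult_left_mono)
  then have "s * measure M W \<le> C\<^sup>2 * r * measure M W"
    using r s by (simp add: ennreal_mult''[symmetric] ennreal_le_iff)
  then have "(s - C\<^sup>2 * r) * measure M W \<le> 0"
    by (simp add: algebra_simps)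
  with s have "measure M W = 0"
    using measure_nonneg[of M W] by (simp add: mult_le_0_iff)
  with W have "W \<in> null_sets M"
    by (simp add: null_sets_def emeasure_eq_measure)
  with \<open>E \<subseteq> W\<close> show ?thesis
    unfolding E_def \<nu>_def by blast
qed

lemma avg_nn_eq_density:
  assumes "a \<in> borel_measurable M" "B \<in> sets M"
  shows "avg_nn M B a = emeasure (density M a) B / emeasure M B"
  using assms by (simp add: avg_nn_def emeasure_density)

lemma heavy_point_of_less_upper_average:
  assumes a: "a \<in> borel_measurable M" and less: "ennreal t < upper_average M a x"
  shows "x \<in> heavy_points t (density M a)"
proof -
  have "\<exists>\<^sub>F \<rho> in at_right 0. ennreal t < avg_nn M (ball x \<rho>) a"
  proof (rule ccontr)
    assume "\<not> ?thesis"
    then have "\<forall>\<^sub>F \<rho> in at_right 0. avg_nn M (ball x \<rho>) a \<le> ennreal t"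
      by (simp add: not_frequently not_less)
    then have "upper_average M a x \<le> ennreal t"
      unfolding upper_average_def by (rule Limsup_bounded)
    with less show False
      by simp
  qed
  moreover have "ennreal t * emeasure M B \<le> emeasure (density M a) B"
    if "ennreal t < avg_nn M B a" "B \<in> sets M" for B
  proof (rule ccontr)
    assume "\<not> ?thesis"
    then have lt: "emeasure (density M a) B < ennreal t * emeasure M B"
      by simp
    then have "0 < emeasure M B"
      by (auto intro: gr_zeroI)
    with lt have "avg_nn M B a \<le> ennreal t"
      using a that(2) by (simp add: avg_nn_eq_density divide_le_posI_ennreal mult.commute)
    with that(1) show False
      by simp
  qed
  ultimately show ?thesis
    unfolding heavy_points_def by (auto elim: frequently_elim1)
qed

lemma AE_upper_average_le:
  assumes a: "a \<in> borel_measurable M" "(\<integral>\<^sup>+x. a x \<partial>M) < \<infinity>"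
  shows "AE x in M. upper_average M a x \<le> ennreal (2 * C\<^sup>2) * a x"
proof -
  \<comment> \<open>Rational thresholds make the exceptional set a countable union of null sets.\<close>
  define E where "E q = {x. a x < ennreal (of_rat q)} \<inter> heavy_points (2 * C\<^sup>2 * of_rat q) (density M a)"
    for q :: rat
  have "AE x in M. x \<notin> E q" if "0 < q" for q
  proof -
    have "C\<^sup>2 * of_rat q < 2 * C\<^sup>2 * of_rat q" "0 \<le> (of_rat q :: real)"
      using that doubling_constant by simp_all
    then obtain N where "N \<in> null_sets M" "E q \<subseteq> N"
      using null_set_of_low_heavy_points[OF a] unfolding E_def by blast
    then show ?thesis
      by (intro AE_I'[of N]) auto
  qed
  then have "AE x in M. \<forall>q. 0 < q \<longrightarrow> x \<notin> E q"
    by (subst AE_all_countable) auto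
  then show ?thesis
  proof (rule eventually_mono)
    fix x assume x: "\<forall>q. 0 < q \<longrightarrow> x \<notin> E q"
    show "upper_average M a x \<le> ennreal (2 * C\<^sup>2) * a x"
    proof (rule ccontr)
      assume "\<not> ?thesis"
      then obtain q where q: "0 < q" "a x < ennreal (of_rat q)"
          "ennreal (2 * C\<^sup>2 * of_rat q) < upper_average M a x"
        using ex_rat_between_ennreal[of "2 * C\<^sup>2" "a x"] doubling_constant by force
      then have "x \<in> E q"
        using heavy_point_of_less_upper_average[OF a(1)] by (simp add: E_def)
      with x q(1) show False
        by blast
    qed
  qed
qed

end

lemma doubling_imp_compact_doubling_space:
  fixes M :: "'a::metric_space measure"
  assumes "compact (UNIV :: 'a set)" "sets M = sets borel"
    and "emeasure M (space M) \<noteq> \<infinity>" "doubling M"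
  shows "\<exists>C. compact_doubling_space M C"
proof -
  obtain C where "1 \<le> C"
      "\<And>x \<rho>. 0 < \<rho> \<Longrightarrow> emeasure M (ball x \<rho>) \<le> ennreal C * emeasure M (ball x (\<rho> / 2))"
    using assms(4) unfolding doubling_def by blast
  moreover have "finite_measure M"
    using assms(3) by (rule finite_measureI)
  ultimately show ?thesis
    using assms(1,2) by (auto simp: compact_doubling_space_def compact_doubling_space_axioms_def)
qed

section \<open>Scaling Sobolev competitors\<close>

lemma borel_measurable_vec_lambda:
  fixes f :: "'n::finite \<Rightarrow> 'a \<Rightarrow> 'b::euclidean_space"
  assumes "\<And>i. f i \<in> borel_measurable M"
  shows "(\<lambda>x. \<chi> i. f i x) \<in> borel_measurable M"
proof (subst borel_measurable_euclidean_space, intro ballI)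
  fix b :: "'b^'n" assume "b \<in> Basis"
  then obtain i u where iu: "u \<in> Basis" "b = axis i u"
    by (auto simp: Basis_vec_def)
  have "(\<lambda>x. f i x \<bullet> u) \<in> borel_measurable M"
    using assms[of i] by measurable
  then show "(\<lambda>x. (\<chi> i. f i x) \<bullet> b) \<in> borel_measurable M"
    by (simp add: iu inner_axis)
qed

lemma Lip_fun_component:
  fixes u :: "'a::metric_space \<Rightarrow> real^'m"
  assumes "Lip_fun u"
  shows "Lip_fun (\<lambda>z. u z $ i)"
proof -
  obtain C where C: "C-lipschitz_on UNIV u"
    using assms by (auto simp: Lip_fun_def)
  have "C-lipschitz_on UNIV (\<lambda>z. u z $ i)"
  proof (rule lipschitz_onI)
    fix x y :: 'a
    have "dist (u x $ i) (u y $ i) \<le> norm (u x - u y)"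
      using component_le_norm_cart[of "u x - u y" i] by (simp add: dist_real_def)
    also have "\<dots> \<le> C * dist x y"
      using lipschitz_onD[OF C] by (simp add: dist_norm)
    finally show "dist (u x $ i) (u y $ i) \<le> C * dist x y" .
  qed (rule lipschitz_on_nonneg[OF C])
  then show ?thesis
    by (auto simp: Lip_fun_def)
qed

lemma Lip_fun_scaleR:
  fixes u :: "'a::metric_space \<Rightarrow> 'b::real_normed_vector"
  assumes "Lip_fun u"
  shows "Lip_fun (\<lambda>z. t *\<^sub>R u z)"
  using assms lipschitz_on_cmult[of _ UNIV u t] by (auto simp: Lip_fun_def)

lemma borel_measurable_Lip_fun:
  fixes u :: "'a::metric_space \<Rightarrow> 'b::real_normed_vector"
  assumes "sets M = sets borel" "Lip_fun u"
  shows "u \<in> borel_measurable M"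
proof -
  obtain C where "C-lipschitz_on UNIV u"
    using assms(2) by (auto simp: Lip_fun_def)
  then have "u \<in> borel_measurable borel"
    by (intro borel_measurable_continuous_onI lipschitz_on_continuous_on)
  then show ?thesis
    using measurable_cong_sets[OF assms(1) refl] by metis
qed

lemma borel_measurable_grad_mu:
  assumes "cheeger_differential M D" "Lip_fun u"
  shows "grad_mu D u \<in> borel_measurable M"
  using assms unfolding grad_mu_def cheeger_differential_def
  by (intro borel_measurable_vec_lambda) (simp add: Lip_fun_component)

lemma grad_mu_scaleR:
  fixes u :: "'a::metric_space \<Rightarrow> real^'m"
  assumes "cheeger_differential M D" "Lip_fun u"
  shows "AE y in M. grad_mu D (\<lambda>z. t *\<^sub>R u z) y = t *\<^sub>R grad_mu D u y"
proof -
  have "AE y in M. D (\<lambda>z. c * f z) y = c *\<^sub>R D f y" if "Lip_fun f" for f c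
    using assms(1) that unfolding cheeger_differential_def by blast
  then have "AE y in M. \<forall>i. D (\<lambda>z. t * u z $ i) y = t *\<^sub>R D (\<lambda>z. u z $ i) y"
    using assms(2) by (subst AE_all_countable) (simp add: Lip_fun_component)
  then show ?thesis
    by eventually_elim (simp add: grad_mu_def vec_eq_iff)
qed

lemma nn_integral_norm_scaleR_powr:
  fixes f :: "'a \<Rightarrow> 'b::real_normed_vector"
  assumes "f \<in> borel_measurable M"
  shows "(\<integral>\<^sup>+y. ennreal (norm (t *\<^sub>R f y) powr p) \<partial>M)
       = ennreal (\<bar>t\<bar> powr p) * (\<integral>\<^sup>+y. ennreal (norm (f y) powr p) \<partial>M)"
proof -
  have "(\<integral>\<^sup>+y. ennreal (norm (t *\<^sub>R f y) powr p) \<partial>M)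
      = (\<integral>\<^sup>+y. ennreal (\<bar>t\<bar> powr p) * ennreal (norm (f y) powr p) \<partial>M)"
    by (simp add: powr_mult ennreal_mult)
  also have "\<dots> = ennreal (\<bar>t\<bar> powr p) * (\<integral>\<^sup>+y. ennreal (norm (f y) powr p) \<partial>M)"
    using assms by (intro nn_integral_cmult) measurable
  finally show ?thesis .
qed

lemma Lp_space_scaleR:
  fixes f :: "'a \<Rightarrow> 'b::real_normed_vector"
  assumes "Lp_space M p f"
  shows "Lp_space M p (\<lambda>y. t *\<^sub>R f y)"
  using assms nn_integral_norm_scaleR_powr[of f M t p]
  by (auto simp: Lp_space_def ennreal_mult_less_top)

lemma tendsto_nn_integral_norm_scaleR_powr:
  fixes f :: "nat \<Rightarrow> 'a \<Rightarrow> 'b::real_normed_vector"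
  assumes "\<And>k. f k \<in> borel_measurable M"
    and "(\<lambda>k. \<integral>\<^sup>+y. ennreal (norm (f k y) powr p) \<partial>M) \<longlonglongrightarrow> 0"
  shows "(\<lambda>k. \<integral>\<^sup>+y. ennreal (norm (t *\<^sub>R f k y) powr p) \<partial>M) \<longlonglongrightarrow> 0"
proof -
  have "(\<lambda>k. ennreal (\<bar>t\<bar> powr p) * (\<integral>\<^sup>+y. ennreal (norm (f k y) powr p) \<partial>M))
      \<longlonglongrightarrow> ennreal (\<bar>t\<bar> powr p) * 0"
    using assms(2) by (intro ennreal_tendsto_cmult) simp_all
  then show ?thesis
    by (simp only: nn_integral_norm_scaleR_powr[OF assms(1)] mult_zero_right)
qed

lemma W1p0_grad_scaleR:
  fixes w :: "'a::metric_space \<Rightarrow> real^'m"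
  assumes M: "sets M = sets borel" and D: "cheeger_differential M D"
    and W: "W1p0_grad M D p A w G"
  shows "W1p0_grad M D p A (\<lambda>y. t *\<^sub>R w y) (\<lambda>y. t *\<^sub>R G y)"
proof -
  obtain u where u: "\<And>k. Lip_fun (u k)" "\<And>k y. y \<notin> A \<Longrightarrow> u k y = 0"
      "(\<lambda>k. \<integral>\<^sup>+ y. ennreal (norm (u k y - w y) powr p) \<partial>M) \<longlonglongrightarrow> 0"
      "(\<lambda>k. \<integral>\<^sup>+ y. ennreal (norm (grad_mu D (u k) y - G y) powr p) \<partial>M) \<longlonglongrightarrow> 0"
    using W unfolding W1p0_grad_def by blast
  have w: "Lp_space M p w" and G: "Lp_space M p G"
    using W by (simp_all add: W1p0_grad_def)
  have [measurable]: "w \<in> borel_measurable M" "G \<in> borel_measurable M"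
    "u k \<in> borel_measurable M" "grad_mu D (u k) \<in> borel_measurable M" for k
    using w G borel_measurable_Lip_fun[OF M u(1)] borel_measurable_grad_mu[OF D u(1)]
    by (simp_all add: Lp_space_def)
  have "(\<lambda>k. \<integral>\<^sup>+ y. ennreal (norm (t *\<^sub>R (u k y - w y)) powr p) \<partial>M) \<longlonglongrightarrow> 0"
    using u(3) by (intro tendsto_nn_integral_norm_scaleR_powr) measurable
  then have approx: "(\<lambda>k. \<integral>\<^sup>+ y. ennreal (norm (t *\<^sub>R u k y - t *\<^sub>R w y) powr p) \<partial>M) \<longlonglongrightarrow> 0"
    by (simp add: scaleR_diff_right)
  have "(\<lambda>k. \<integral>\<^sup>+ y. ennreal (norm (t *\<^sub>R (grad_mu D (u k) y - G y)) powr p) \<partial>M) \<longlonglongrightarrow> 0"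
    using u(4) by (intro tendsto_nn_integral_norm_scaleR_powr) measurable
  moreover have "(\<integral>\<^sup>+ y. ennreal (norm (grad_mu D (\<lambda>z. t *\<^sub>R u k z) y - t *\<^sub>R G y) powr p) \<partial>M)
      = (\<integral>\<^sup>+ y. ennreal (norm (t *\<^sub>R (grad_mu D (u k) y - G y)) powr p) \<partial>M)" for k
    using grad_mu_scaleR[OF D u(1), of t k]
    by (intro nn_integral_cong_AE) (auto elim!: eventually_mono simp: scaleR_diff_right)
  ultimately have approx_grad:
    "(\<lambda>k. \<integral>\<^sup>+ y. ennreal (norm (grad_mu D (\<lambda>z. t *\<^sub>R u k z) y - t *\<^sub>R G y) powr p) \<partial>M) \<longlonglongrightarrow> 0"
    by simp
  show ?thesis
    unfolding W1p0_grad_def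
    using w G u(1,2) approx approx_grad
    by (intro conjI Lp_space_scaleR exI[of _ "\<lambda>k z. t *\<^sub>R u k z"]) (auto intro: Lip_fun_scaleR)
qed

section \<open>The quasiconvexification inherits radial upper semicontinuity\<close>

lemma avg_nn_le_linear:
  fixes f g h :: "'a \<Rightarrow> ennreal"
  assumes "\<And>y. y \<in> B \<Longrightarrow> h y \<le> c * f y + d * g y"
    and "f \<in> borel_measurable M" "g \<in> borel_measurable M" "B \<in> sets M"
  shows "avg_nn M B h \<le> c * avg_nn M B f + d * avg_nn M B g"
proof -
  have "(\<integral>\<^sup>+y\<in>B. h y \<partial>M) \<le> (\<integral>\<^sup>+y. c * (f y * indicator B y) + d * (g y * indicator B y) \<partial>M)"
    using assms(1) by (intro nn_integral_mono) (auto simp: indicator_def)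
  also have "\<dots> = c * (\<integral>\<^sup>+y\<in>B. f y \<partial>M) + d * (\<integral>\<^sup>+y\<in>B. g y \<partial>M)"
    using assms(2-4) by (simp add: nn_integral_add nn_integral_cmult)
  finally have "(\<integral>\<^sup>+y\<in>B. h y \<partial>M) \<le> c * (\<integral>\<^sup>+y\<in>B. f y \<partial>M) + d * (\<integral>\<^sup>+y\<in>B. g y \<partial>M)" .
  then have "(\<integral>\<^sup>+y\<in>B. h y \<partial>M) / emeasure M B
      \<le> (c * (\<integral>\<^sup>+y\<in>B. f y \<partial>M) + d * (\<integral>\<^sup>+y\<in>B. g y \<partial>M)) / emeasure M B"
    by (rule divide_right_mono_ennreal)
  then show ?thesis
    unfolding avg_nn_def by (simp only: divide_ennreal_def distrib_right mult.assoc)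
qed

lemma INF_le_linear_ennreal:
  fixes X :: "'b \<Rightarrow> ennreal" and c d :: ennreal
  assumes "\<And>G. G \<in> S \<Longrightarrow> z \<le> c * X G + d" and "c < \<infinity>" "c \<noteq> 0"
  shows "z \<le> c * (INF G\<in>S. X G) + d"
proof (cases "S = {}")
  case False
  have "continuous_on UNIV (\<lambda>u. c * u + d)"
    using assms(2) by (intro continuous_intros ennreal_continuous_on_cmult) simp_all
  then have "c * (INF G\<in>S. X G) + d = (INF G\<in>S. c * X G + d)"
    using False by (subst continuous_at_Inf_mono[of "\<lambda>u. c * u + d"])
      (auto simp: mono_def image_comp intro!: add_right_mono mult_left_mono continuous_on_imp_continuous_within)
  with assms(1) show ?thesis
    by (auto intro: INF_greatest)
qed (use assms(3) in \<open>simp add: ennreal_mult_top\<close>)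

lemma Limsup_add_le_ennreal:
  fixes f g :: "'a \<Rightarrow> ennreal"
  shows "Limsup F (\<lambda>x. f x + g x) \<le> Limsup F f + Limsup F g"
proof (rule ennreal_le_epsilon)
  fix e :: real assume fin: "Limsup F f + Limsup F g < top" and "0 < e"
  have "Limsup F f < Limsup F f + ennreal (e / 2)" "Limsup F g < Limsup F g + ennreal (e / 2)"
    using fin \<open>0 < e\<close> by (auto simp: ennreal_add_left_cancel_less less_top)
  from this[THEN Limsup_lessD]
  have "\<forall>\<^sub>F x in F. f x + g x \<le> (Limsup F f + ennreal (e / 2)) + (Limsup F g + ennreal (e / 2))"
    by eventually_elim (intro add_mono less_imp_le)
  then have "Limsup F (\<lambda>x. f x + g x) \<le> (Limsup F f + ennreal (e / 2)) + (Limsup F g + ennreal (e / 2))"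
    by (rule Limsup_bounded)
  also have "\<dots> = Limsup F f + Limsup F g + ennreal e"
    using \<open>0 < e\<close> by (simp add: ac_simps flip: ennreal_plus)
  finally show "Limsup F (\<lambda>x. f x + g x) \<le> Limsup F f + Limsup F g + ennreal e" .
qed

lemma Limsup_le_linear_ennreal:
  fixes f g h :: "'a \<Rightarrow> ennreal" and c d :: ennreal
  assumes "\<forall>\<^sub>F x in F. h x \<le> c * f x + d * g x" and "c < \<infinity>" "d < \<infinity>" and "F \<noteq> bot"
  shows "Limsup F h \<le> c * Limsup F f + d * Limsup F g"
proof -
  have cmult: "Limsup F (\<lambda>x. k * u x) = k * Limsup F u" if "k < \<infinity>" for k and u :: "'a \<Rightarrow> ennreal"
    using that assms(4)
    by (intro Limsup_compose_continuous_mono ennreal_continuous_on_cmult continuous_on_id)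
      (auto simp: mono_def mult_left_mono)
  have "Limsup F h \<le> Limsup F (\<lambda>x. c * f x + d * g x)"
    using assms(1) by (rule Limsup_mono)
  also have "\<dots> \<le> Limsup F (\<lambda>x. c * f x) + Limsup F (\<lambda>x. d * g x)"
    by (rule Limsup_add_le_ennreal)
  also have "\<dots> = c * Limsup F f + d * Limsup F g"
    using assms(2,3) by (simp add: cmult)
  finally show ?thesis .
qed

lemma borel_measurable_integrand:
  fixes L :: "'a::metric_space \<Rightarrow> 'v::second_countable_topology \<Rightarrow> ennreal"
  assumes "compact (UNIV :: 'a set)" "sets M = sets borel"
    and L: "(\<lambda>(x, \<xi>). L x \<xi>) \<in> borel_measurable borel" and "g \<in> borel_measurable M"
  shows "(\<lambda>y. L y (g y)) \<in> borel_measurable M"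
proof -
  have "(\<lambda>y. y) \<in> borel_measurable M"
    using measurable_ident_sets[OF assms(2)] .
  then have "(\<lambda>y. (y, g y)) \<in> borel_measurable M"
    using assms(4) by (rule measurable_Pair_compact_metric[OF assms(1)])
  from measurable_compose[OF this L] show ?thesis
    by simp
qed

lemma quasiconvexification_scaleR_le:
  fixes L :: "'a::metric_space \<Rightarrow> real^'n^'m \<Rightarrow> ennreal"
  assumes "compact (UNIV :: 'a set)" and M: "sets M = sets borel"
    and D: "cheeger_differential M D" and L: "(\<lambda>(x, \<xi>). L x \<xi>) \<in> borel_measurable borel"
    and a: "a \<in> borel_measurable M" and "0 \<le> \<delta>"
    and bound: "\<And>y \<eta>. L y (t *\<^sub>R \<eta>) \<le> ennreal (1 + \<delta>) * L y \<eta> + ennreal \<delta> * a y"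
  shows "quasiconvexification M D p L x (t *\<^sub>R \<xi>)
    \<le> ennreal (1 + \<delta>) * quasiconvexification M D p L x \<xi> + ennreal \<delta> * upper_average M a x"
proof -
  define S where "S \<rho> = {G. \<exists>w :: 'a \<Rightarrow> real^'m. W1p0_grad M D p (ball x \<rho>) w G}" for \<rho>
  define I where "I \<zeta> = (\<lambda>\<rho>. INF G\<in>S \<rho>. avg_nn M (ball x \<rho>) (\<lambda>y. L y (\<zeta> + G y)))" for \<zeta>
  have "I (t *\<^sub>R \<xi>) \<rho> \<le> ennreal (1 + \<delta>) * I \<xi> \<rho> + ennreal \<delta> * avg_nn M (ball x \<rho>) a" for \<rho>
    unfolding I_def
  proof (rule INF_le_linear_ennreal)
    fix G assume "G \<in> S \<rho>"
    then obtain w where w: "W1p0_grad M D p (ball x \<rho>) w G"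
      by (auto simp: S_def)
    then have "(\<lambda>y. t *\<^sub>R G y) \<in> S \<rho>"
      unfolding S_def using W1p0_grad_scaleR[OF M D] by blast
    then have "(INF G\<in>S \<rho>. avg_nn M (ball x \<rho>) (\<lambda>y. L y (t *\<^sub>R \<xi> + G y)))
        \<le> avg_nn M (ball x \<rho>) (\<lambda>y. L y (t *\<^sub>R (\<xi> + G y)))"
      by (auto intro: INF_lower2 simp: scaleR_right_distrib)
    also have "\<dots> \<le> ennreal (1 + \<delta>) * avg_nn M (ball x \<rho>) (\<lambda>y. L y (\<xi> + G y))
        + ennreal \<delta> * avg_nn M (ball x \<rho>) a"
    proof (rule avg_nn_le_linear)
      have "G \<in> borel_measurable M"
        using w by (simp add: W1p0_grad_def Lp_space_def)
      then have "(\<lambda>y. \<xi> + G y) \<in> borel_measurable M"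
        by measurable
      then show "(\<lambda>y. L y (\<xi> + G y)) \<in> borel_measurable M"
        by (rule borel_measurable_integrand[OF assms(1) M L])
    qed (use bound a M in simp_all)
    finally show "(INF G\<in>S \<rho>. avg_nn M (ball x \<rho>) (\<lambda>y. L y (t *\<^sub>R \<xi> + G y)))
        \<le> ennreal (1 + \<delta>) * avg_nn M (ball x \<rho>) (\<lambda>y. L y (\<xi> + G y))
          + ennreal \<delta> * avg_nn M (ball x \<rho>) a" .
  qed (use \<open>0 \<le> \<delta>\<close> in simp_all)
  then have "Limsup (at_right 0) (I (t *\<^sub>R \<xi>))
      \<le> ennreal (1 + \<delta>) * Limsup (at_right 0) (I \<xi>)
        + ennreal \<delta> * Limsup (at_right 0) (\<lambda>\<rho>. avg_nn M (ball x \<rho>) a)"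
    by (intro Limsup_le_linear_ennreal always_eventually) simp_all
  then show ?thesis
    by (simp add: quasiconvexification_def upper_average_def I_def S_def)
qed

lemma scaled_le_of_Delta_le:
  fixes F :: "'a \<Rightarrow> 'v::real_vector \<Rightarrow> ennreal"
  assumes "Delta a F t \<le> ereal \<delta>" "0 < \<delta>" "0 < a y"
  shows "F y (t *\<^sub>R \<eta>) \<le> ennreal (1 + \<delta>) * F y \<eta> + ennreal \<delta> * a y"
proof (cases "F y \<eta> = \<infinity> \<or> a y = \<infinity>")
  case True
  then show ?thesis
    using assms(2) by (auto simp: ennreal_mult_top)
next
  case False
  then obtain l a0 where l: "F y \<eta> = ennreal l" "0 \<le> l" and a0: "a y = ennreal a0" "0 < a0"
    using assms(3) by (cases "F y \<eta>"; cases "a y") auto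
  have "(enn2ereal (F y (t *\<^sub>R \<eta>)) - enn2ereal (F y \<eta>)) / (enn2ereal (a y) + enn2ereal (F y \<eta>))
      \<le> Delta a F t"
    unfolding Delta_def using l by (intro SUP_upper2[of y] SUP_upper) auto
  from order_trans[OF this assms(1)]
  have quotient: "(enn2ereal (F y (t *\<^sub>R \<eta>)) - ereal l) / ereal (a0 + l) \<le> ereal \<delta>"
    using l a0 by simp
  show ?thesis
  proof (cases "F y (t *\<^sub>R \<eta>)")
    case (real l')
    then have "(l' - l) / (a0 + l) \<le> \<delta>"
      using quotient a0 l by simp
    then have "l' \<le> (1 + \<delta>) * l + \<delta> * a0"
      using a0 l by (simp add: divide_le_eq algebra_simps)
    then have "ennreal l' \<le> ennreal ((1 + \<delta>) * l + \<delta> * a0)"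
      by (rule ennreal_leI)
    also have "\<dots> = ennreal (1 + \<delta>) * ennreal l + ennreal \<delta> * ennreal a0"
      using assms(2) l a0 by (simp add: ennreal_plus ennreal_mult)
    finally show ?thesis
      using real l a0 by simp
  qed (use quotient l a0 in simp)
qed

lemma Delta_le_of_scaled_le:
  fixes F :: "'a \<Rightarrow> 'v::real_vector \<Rightarrow> ennreal"
  assumes bound: "\<And>x \<xi>. a x \<noteq> \<infinity> \<Longrightarrow> F x (t *\<^sub>R \<xi>) \<le> ennreal (1 + \<delta>) * F x \<xi> + ennreal \<delta> * a x"
    and a: "\<And>x. 0 < a x" and "0 \<le> \<delta>"
  shows "Delta a F t \<le> ereal \<delta>"
  unfolding Delta_def
proof (intro SUP_least)
  fix x \<xi> assume "\<xi> \<in> {\<xi>. F x \<xi> < \<infinity>}"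
  then obtain l where l: "F x \<xi> = ennreal l" "0 \<le> l"
    by (cases "F x \<xi>") auto
  show "(enn2ereal (F x (t *\<^sub>R \<xi>)) - enn2ereal (F x \<xi>)) / (enn2ereal (a x) + enn2ereal (F x \<xi>))
      \<le> ereal \<delta>"
  proof (cases "a x")
    case (real a0)
    with a[of x] have "0 < a0"
      by simp
    have "F x (t *\<^sub>R \<xi>) \<le> ennreal (1 + \<delta>) * ennreal l + ennreal \<delta> * ennreal a0"
      using bound[of x \<xi>] real l by simp
    also have "\<dots> = ennreal ((1 + \<delta>) * l + \<delta> * a0)"
      using \<open>0 \<le> \<delta>\<close> l \<open>0 < a0\<close> by (simp add: ennreal_mult)
    finally have le: "F x (t *\<^sub>R \<xi>) \<le> ennreal ((1 + \<delta>) * l + \<delta> * a0)" .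
    then obtain l' where l': "F x (t *\<^sub>R \<xi>) = ennreal l'" "0 \<le> l'"
      by (cases "F x (t *\<^sub>R \<xi>)") (auto simp: top_unique)
    have "0 \<le> (1 + \<delta>) * l + \<delta> * a0"
      using \<open>0 \<le> \<delta>\<close> l \<open>0 < a0\<close> by simp
    then have "l' \<le> (1 + \<delta>) * l + \<delta> * a0"
      using le unfolding l'(1) by (rule ennreal_le_iff[THEN iffD1])
    then have "(l' - l) / (a0 + l) \<le> \<delta>"
      using l \<open>0 < a0\<close> by (simp add: divide_le_eq algebra_simps)
    then show ?thesis
      using l l' real \<open>0 < a0\<close> by simp
  next
    case top
    \<comment> \<open>Dividing by \<open>\<infinity>\<close> gives \<open>0\<close> in \<open>ereal\<close>: points of infinite weight impose no constraint.\<close>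
    then show ?thesis
      using l \<open>0 \<le> \<delta>\<close> by simp
  qed
qed

lemma Delta_quasiconvexification_le:
  fixes L :: "'a::metric_space \<Rightarrow> real^'n^'m \<Rightarrow> ennreal"
  assumes "compact (UNIV :: 'a set)" "sets M = sets borel" "cheeger_differential M D"
    and "(\<lambda>(x, \<xi>). L x \<xi>) \<in> borel_measurable borel"
    and a: "a \<in> borel_measurable M" "\<And>x. 0 < a x" and "Delta a L t \<le> ereal \<delta>" "0 < \<delta>"
    and a': "\<And>x. 0 < a' x" "\<And>x. a' x \<noteq> \<infinity> \<Longrightarrow> upper_average M a x \<le> a' x"
  shows "Delta a' (quasiconvexification M D p L) t \<le> ereal \<delta>"
proof (rule Delta_le_of_scaled_le[OF _ a'(1)])
  fix x \<xi> assume "a' x \<noteq> \<infinity>"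
  have "quasiconvexification M D p L x (t *\<^sub>R \<xi>)
      \<le> ennreal (1 + \<delta>) * quasiconvexification M D p L x \<xi> + ennreal \<delta> * upper_average M a x"
    using scaled_le_of_Delta_le[OF assms(7,8) a(2)] \<open>0 < \<delta>\<close>
    by (intro quasiconvexification_scaleR_le[OF assms(1-4) a(1)]) simp_all
  also have "\<dots> \<le> ennreal (1 + \<delta>) * quasiconvexification M D p L x \<xi> + ennreal \<delta> * a' x"
    using a'(2)[OF \<open>a' x \<noteq> \<infinity>\<close>] by (intro add_left_mono mult_left_mono) simp_all
  finally show "quasiconvexification M D p L x (t *\<^sub>R \<xi>)
      \<le> ennreal (1 + \<delta>) * quasiconvexification M D p L x \<xi> + ennreal \<delta> * a' x" .
qed (use \<open>0 < \<delta>\<close> in simp)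

lemma ru_usc_of_Delta_le:
  assumes "a \<in> borel_measurable M" "\<And>x. 0 < a x" "(\<integral>\<^sup>+x. a x \<partial>M) < \<infinity>"
    and Delta: "\<And>\<delta>. 0 < \<delta> \<Longrightarrow> \<forall>\<^sub>F t in at_left 1. Delta a F t \<le> ereal \<delta>"
  shows "ru_usc M F"
proof -
  have "Limsup (at_left 1) (Delta a F) \<le> 0"
  proof (rule ereal_le_epsilon2)
    fix \<delta> :: real assume "0 < \<delta>"
    then show "Limsup (at_left 1) (Delta a F) \<le> 0 + ereal \<delta>"
      using Limsup_bounded[OF Delta] by simp
  qed
  with assms(1-3) show ?thesis
    by (auto simp: ru_usc_def)
qed

lemma dominating_weight_off_null_set:
  assumes a: "a \<in> borel_measurable M" "\<And>x. 0 < a x" "(\<integral>\<^sup>+x. a x \<partial>M) < \<infinity>"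
    and b: "AE x in M. b x \<le> ennreal K * a x" and "0 < K"
  obtains a' where "a' \<in> borel_measurable M" "\<And>x. 0 < a' x" "(\<integral>\<^sup>+x. a' x \<partial>M) < \<infinity>"
    "\<And>x. a' x \<noteq> \<infinity> \<Longrightarrow> b x \<le> a' x"
proof -
  obtain N where N: "\<And>x. x \<in> space M - N \<Longrightarrow> b x \<le> ennreal K * a x" "N \<in> null_sets M"
    using AE_E3[OF b] by blast
  define a' where "a' x = (if x \<in> space M - N then ennreal K * a x else \<infinity>)" for x
  show ?thesis
  proof
    show "a' \<in> borel_measurable M"
      unfolding a'_def using a(1) N(2) by (intro measurable_If_set) auto
    show "0 < a' x" for x
      using a(2)[of x] \<open>0 < K\<close> by (simp add: a'_def ennreal_zero_less_mult_iff)
    have "AE x in M. a' x = ennreal K * a x"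
      using N(2) by (rule AE_I') (auto simp: a'_def)
    then have "(\<integral>\<^sup>+x. a' x \<partial>M) = ennreal K * (\<integral>\<^sup>+x. a x \<partial>M)"
      using a(1) by (simp add: nn_integral_cong_AE nn_integral_cmult)
    then show "(\<integral>\<^sup>+x. a' x \<partial>M) < \<infinity>"
      using a(3) by (simp add: ennreal_mult_less_top)
    show "b x \<le> a' x" if "a' x \<noteq> \<infinity>" for x
      using that N(1) by (auto simp: a'_def split: if_splits)
  qed
qed

theorem mainTheorem8:
  fixes M :: "'a::metric_space measure"
    and D :: "('a \<Rightarrow> real) \<Rightarrow> 'a \<Rightarrow> real^'n"
    and p :: real
    and L :: "'a \<Rightarrow> real^'n^'m \<Rightarrow> ennreal"
  assumes "compact (UNIV :: 'a set)"
    and "length_space TYPE('a)"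
    and "sets M = sets borel" and "space M = UNIV" and "emeasure M UNIV < \<infinity>"
    and "doubling M"
    and "1 < p"
    and "weak_poincare M p"
    and "cheeger_differential M D"
    and "(\<lambda>(x, \<xi>). L x \<xi>) \<in> borel_measurable borel"
    and "ru_usc M L"
  shows "ru_usc M (quasiconvexification M D p L)"
proof -
  have "emeasure M (space M) \<noteq> \<infinity>"
    using assms(4,5) by simp
  then obtain C where "compact_doubling_space M C"
    using doubling_imp_compact_doubling_space assms(1,3,6) by blast
  then interpret compact_doubling_space M C .
  obtain a where a: "a \<in> borel_measurable M" "\<And>x. 0 < a x" "(\<integral>\<^sup>+x. a x \<partial>M) < \<infinity>"
    and Delta_a: "Limsup (at_left 1) (Delta a L) \<le> 0"
    using assms(11) unfolding ru_usc_def by blast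
  have "0 < 2 * C\<^sup>2"
    using doubling_constant by simp
  then obtain a' where a': "a' \<in> borel_measurable M" "\<And>x. 0 < a' x" "(\<integral>\<^sup>+x. a' x \<partial>M) < \<infinity>"
      "\<And>x. a' x \<noteq> \<infinity> \<Longrightarrow> upper_average M a x \<le> a' x"
    using dominating_weight_off_null_set[OF a AE_upper_average_le[OF a(1,3)]] by blast
  show ?thesis
  proof (rule ru_usc_of_Delta_le[OF a'(1-3)])
    fix \<delta> :: real assume "0 < \<delta>"
    with Delta_a have "\<forall>\<^sub>F t in at_left 1. Delta a L t < ereal \<delta>"
      by (intro Limsup_lessD) (simp add: order.strict_trans1)
    then show "\<forall>\<^sub>F t in at_left 1. Delta a' (quasiconvexification M D p L) t \<le> ereal \<delta>"
      using Delta_quasiconvexification_le[OF assms(1,3,9,10) a(1,2) less_imp_le \<open>0 < \<delta>\<close> a'(2,4)]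
      by (rule eventually_mono)
  qed
qed

end
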